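(* $M_1$ has exactly two irreducible representations, both one-dimensional: the trivial representation, and the representation $L_\xi$ defined by $a\mapsto1+a'$.
   Context: Work in $\operatorname{Ver}_4^+$, the category of $k[d]/d^2$-modules ($\operatorname{char}k=2$, $k$ algebraically closed, $d$ primitive) with braiding $c(v\otimes w)=w\otimes v+dw\otimes dv$, and $a'=da$. $M_1$ is the affine group scheme sending a commutative algebra $A$ to $A$ with group operation $a*b=a+b+a'b$. Its coordinate ring is $k[X,X']$ with $\Delta(X)=X\otimes1+1\otimes X+X'\otimes X$. *)

theory Defs
  imports "HOL-Computational_Algebra.Polynomial" "Jordan_Normal_Form.Matrix"
begin

(* The coordinate ring O(M_1) = k[X,X'] as a commutative algebra in Ver_4^+.
   Commutativity in Ver_4^+ (ab = ba + b'a') forces X'^2 = 0, so O has the k-basis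
   X^i X'^j with i \<in> nat and j \<in> {0,1}.  The basis element X^i X'^j is indexed by
   (i, j = 1), i.e. by a pair of type nat \<times> bool. *)
type_synonym idx = "nat \<times> bool"

(* Elements of O \<otimes> O, as coefficient functions on pairs of basis indices. *)
type_synonym 'k tens = "idx \<Rightarrow> idx \<Rightarrow> 'k"

definition tunit :: "'k::field tens" where
  "tunit = (\<lambda>p q. if p = (0, False) \<and> q = (0, False) then 1 else 0)"

(* e_p \<otimes> e_q  \<mapsto>  e_p X \<otimes> e_q *)
definition lX :: "'k::field tens \<Rightarrow> 'k tens" where
  "lX f = (\<lambda>(i, b) q. if i = 0 then 0 else f (i - 1, b) q)"
(* e_p \<otimes> e_q  \<mapsto>  e_p X' \<otimes> e_q   (X'^2 = 0) *)
definition lX' :: "'k::field tens \<Rightarrow> 'k tens" where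
  "lX' f = (\<lambda>(i, b) q. if b then f (i, False) q else 0)"
(* e_p \<otimes> e_q  \<mapsto>  e_p \<otimes> e_q X *)
definition rX :: "'k::field tens \<Rightarrow> 'k tens" where
  "rX f = (\<lambda>p (i, b). if i = 0 then 0 else f p (i - 1, b))"
(* e_p \<otimes> e_q  \<mapsto>  e_p \<otimes> e_q X' *)
definition rX' :: "'k::field tens \<Rightarrow> 'k tens" where
  "rX' f = (\<lambda>p (i, b). if b then f p (i, False) else 0)"
(* e_p \<otimes> e_q  \<mapsto>  e_p \<otimes> d(e_q), where d is the derivation with dX = X', dX' = 0,
   so d(X^j) = j X^(j-1) X' and d(X^j X') = 0 *)
definition dR :: "'k::field tens \<Rightarrow> 'k tens" where
  "dR f = (\<lambda>p (i, b). if b then of_nat (i + 1) * f p (i + 1, False) else 0)"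

(* Right multiplication in the braided tensor product algebra O \<otimes> O of Ver_4^+,
   (a \<otimes> b)(c \<otimes> e) = ac \<otimes> be + a c' \<otimes> b' e,
   by Delta(X) = X\<otimes>1 + 1\<otimes>X + X'\<otimes>X and by Delta(X') = X'\<otimes>1 + 1\<otimes>X' + X'\<otimes>X'. *)
definition mulDX :: "'k::field tens \<Rightarrow> 'k tens" where
  "mulDX f = (\<lambda>p q. lX f p q + lX' (dR f) p q + rX f p q + lX' (rX f) p q)"
definition mulDX' :: "'k::field tens \<Rightarrow> 'k tens" where
  "mulDX' f = (\<lambda>p q. lX' f p q + rX' f p q + lX' (rX' f) p q)"

(* Comultiplication: coprod m p q = coefficient of e_p \<otimes> e_q in Delta(e_m),
   Delta(X^i X'^j) = Delta(X)^i Delta(X')^j. *)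
definition coprod :: "idx \<Rightarrow> 'k::field tens" where
  "coprod m = (let g = (mulDX ^^ fst m) tunit in if snd m then mulDX' g else g)"

(* A finite-dimensional representation of M_1 (= O(M_1)-comodule in Ver_4^+) on k^n:
   D is the action of d on V (D^2 = 0), and the coaction is
   rho(v) = \<Sum>_m (R m) v \<otimes> e_m.  The conditions say: rho is a morphism in Ver_4^+
   (commutes with d, where d acts on V \<otimes> O by D \<otimes> 1 + 1 \<otimes> d), counitality
   (epsilon(X) = epsilon(X') = 0), and coassociativity. *)
definition M1_rep :: "nat \<Rightarrow> 'k::field mat \<Rightarrow> (idx \<Rightarrow> 'k mat) \<Rightarrow> bool" where
  "M1_rep n D R \<longleftrightarrow>
     D \<in> carrier_mat n n \<and> D * D = 0\<^sub>m n n \<and>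
     (\<forall>m. R m \<in> carrier_mat n n) \<and> finite {m. R m \<noteq> 0\<^sub>m n n} \<and>
     R (0, False) = 1\<^sub>m n \<and>
     (\<forall>i. R (i, False) * D = D * R (i, False)) \<and>
     (\<forall>i. R (i, True) * D = D * R (i, True) + of_nat (i + 1) \<cdot>\<^sub>m R (i + 1, False)) \<and>
     (\<forall>p q a b. a < n \<longrightarrow> b < n \<longrightarrow>
        (R p * R q) $$ (a, b) = (\<Sum>m\<in>{m. R m \<noteq> 0\<^sub>m n n}. coprod m p q * R m $$ (a, b)))"

definition is_subspace :: "nat \<Rightarrow> 'k::field vec set \<Rightarrow> bool" where
  "is_subspace n W \<longleftrightarrow> W \<subseteq> carrier_vec n \<and> 0\<^sub>v n \<in> W \<and>
     (\<forall>v\<in>W. \<forall>w\<in>W. v + w \<in> W) \<and> (\<forall>c. \<forall>v\<in>W. c \<cdot>\<^sub>v v \<in> W)"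

definition M1_subrep :: "nat \<Rightarrow> 'k::field mat \<Rightarrow> (idx \<Rightarrow> 'k mat) \<Rightarrow> 'k vec set \<Rightarrow> bool" where
  "M1_subrep n D R W \<longleftrightarrow> is_subspace n W \<and> (\<forall>v\<in>W. D *\<^sub>v v \<in> W) \<and>
     (\<forall>m. \<forall>v\<in>W. R m *\<^sub>v v \<in> W)"

definition M1_irreducible :: "nat \<Rightarrow> 'k::field mat \<Rightarrow> (idx \<Rightarrow> 'k mat) \<Rightarrow> bool" where
  "M1_irreducible n D R \<longleftrightarrow> M1_rep n D R \<and> n > 0 \<and>
     (\<forall>W. M1_subrep n D R W \<longrightarrow> W = {0\<^sub>v n} \<or> W = carrier_vec n)"

definition M1_iso :: "nat \<Rightarrow> 'k::field mat \<Rightarrow> (idx \<Rightarrow> 'k mat) \<Rightarrow>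
                      nat \<Rightarrow> 'k mat \<Rightarrow> (idx \<Rightarrow> 'k mat) \<Rightarrow> bool" where
  "M1_iso n D R n' D' R' \<longleftrightarrow> n = n' \<and>
     (\<exists>P \<in> carrier_mat n n. invertible_mat P \<and> P * D = D' * P \<and> (\<forall>m. P * R m = R' m * P))"

(* trivial representation: rho(v) = v \<otimes> 1 *)
definition triv_R :: "idx \<Rightarrow> 'k::field mat" where
  "triv_R m = (if m = (0, False) then 1\<^sub>m 1 else 0\<^sub>m 1 1)"

(* L_xi : a \<mapsto> 1 + a', i.e. rho(v) = v \<otimes> (1 + X') *)
definition Lxi_R :: "idx \<Rightarrow> 'k::field mat" where
  "Lxi_R m = (if m = (0, False) \<or> m = (0, True) then 1\<^sub>m 1 else 0\<^sub>m 1 1)"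

end

theory Submission
  imports Defs
begin

(*
  Write \<rho>(v) = \<Sum>\<^sub>m R\<^sub>m v \<otimes> e\<^sub>m for a representation V.  The coproduct respects the
  X-degree: \<Delta>(X^i X'^j) only involves e\<^sub>p \<otimes> e\<^sub>q with deg p + deg q \<le> i.  Together with
  coassociativity, R\<^sub>p R\<^sub>q = \<Sum>\<^sub>m \<Delta>(e\<^sub>m)\<^sub>p\<^sub>q R\<^sub>m, this lets one lower the X-degree of a
  nonzero vector step by step until \<rho>(w) \<in> V \<otimes> span {1, X'}.  On the space of such
  vectors, B = R\<^sub>X' is idempotent (the X' \<otimes> X' term of \<Delta>(X')) and commutes with d (the
  defect R\<^sub>X of the compatibility of \<rho> with d vanishes there), so it contains a nonzero
  v with d v = 0 and B v \<in> {0, v}.  The line through v is a subrepresentation; hence an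
  irreducible V is this line, and it is the trivial representation if B v = 0 and L\<^sub>\<xi>
  if B v = v.  These two differ since B = 0 on the first and B = 1 on the second.
*)

lemma zero_mat_mult_vec [simp]:
  "w \<in> carrier_vec nc \<Longrightarrow> 0\<^sub>m nr nc *\<^sub>v w = (0\<^sub>v nr :: 'a::semiring_0 vec)"
  by (rule eq_vecI) (auto simp: scalar_prod_def)

lemma zero_smult_vec [simp]: "0 \<cdot>\<^sub>v u = (0\<^sub>v (dim_vec u) :: 'a::ring vec)"
  by (rule eq_vecI) auto

lemma smult_mat_mult_vec:
  "A \<in> carrier_mat nr n \<Longrightarrow> u \<in> carrier_vec n \<Longrightarrow>
   (c \<cdot>\<^sub>m A) *\<^sub>v u = c \<cdot>\<^sub>v (A *\<^sub>v u :: 'a::comm_ring_1 vec)"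
  by (rule eq_vecI) (auto simp: scalar_prod_def sum_distrib_left ac_simps)

lemma is_subspace_line:
  "v \<in> carrier_vec n \<Longrightarrow> is_subspace n (range (\<lambda>a. a \<cdot>\<^sub>v (v :: 'k::field vec)))"
  unfolding is_subspace_def
  by (auto simp: smult_smult_assoc simp flip: add_smult_distrib_vec intro: range_eqI[of _ _ 0])

lemma mult_vec_line:
  fixes A :: "'k::field mat"
  assumes "A \<in> carrier_mat n n" "v \<in> carrier_vec n" "A *\<^sub>v v = c \<cdot>\<^sub>v v"
    and "w \<in> range (\<lambda>a. a \<cdot>\<^sub>v v)"
  shows "A *\<^sub>v w \<in> range (\<lambda>a. a \<cdot>\<^sub>v v)"
  using assms by (auto simp: mult_mat_vec smult_smult_assoc)

lemma line_eq_carrier_vec_imp_le_1: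
  fixes v :: "'k::field vec"
  assumes v: "v \<in> carrier_vec n" and line: "range (\<lambda>a. a \<cdot>\<^sub>v v) = carrier_vec n"
  shows "n \<le> 1"
proof (rule ccontr)
  assume "\<not> n \<le> 1"
  then have n: "2 \<le> n" by simp
  obtain a b where a: "unit_vec n 0 = a \<cdot>\<^sub>v v" and b: "unit_vec n 1 = b \<cdot>\<^sub>v v"
    using line by (metis rangeE unit_vec_carrier)
  have "a * v $ 0 = 1" and "b * v $ 0 = 0" and "b * v $ 1 = 1"
    using arg_cong[OF a, of "\<lambda>x. x $ 0"] arg_cong[OF b, of "\<lambda>x. x $ 0"]
      arg_cong[OF b, of "\<lambda>x. x $ 1"] v n by auto
  then show False by auto
qed

lemma is_subspace_1:
  assumes sub: "is_subspace 1 (W :: 'k::field vec set)"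
  shows "W = {0\<^sub>v 1} \<or> W = carrier_vec 1"
proof (cases "W \<subseteq> {0\<^sub>v 1}")
  case True
  then show ?thesis using sub unfolding is_subspace_def by auto
next
  case False
  then obtain v where v: "v \<in> W" "v \<noteq> 0\<^sub>v 1" by auto
  have vc: "v \<in> carrier_vec 1" using sub v unfolding is_subspace_def by auto
  then have v0: "v $ 0 \<noteq> 0" using v(2) by (auto simp: vec_eq_iff)
  have "u \<in> W" if u: "u \<in> carrier_vec 1" for u
  proof -
    have "u = (u $ 0 / v $ 0) \<cdot>\<^sub>v v" using u vc v0 by (intro eq_vecI) auto
    then show ?thesis using sub v unfolding is_subspace_def by metis
  qed
  then show ?thesis using sub unfolding is_subspace_def by auto
qed

lemma one_mat_1_neq_zero: "(1\<^sub>m 1 :: 'a::zero_neq_one mat) \<noteq> 0\<^sub>m 1 1"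
proof
  assume "(1\<^sub>m 1 :: 'a mat) = 0\<^sub>m 1 1"
  from arg_cong[OF this, of "\<lambda>A. A $$ (0, 0)"] show False by simp
qed

lemma mat_1x1_eqI:
  fixes A B :: "'k::field mat"
  assumes A: "A \<in> carrier_mat 1 1" and B: "B \<in> carrier_mat 1 1"
    and v: "v \<in> carrier_vec 1" "v \<noteq> 0\<^sub>v 1" and Av: "A *\<^sub>v v = B *\<^sub>v v"
  shows "A = B"
proof -
  have "v $ 0 \<noteq> 0"
    using v by (auto simp: vec_eq_iff)
  moreover have "A $$ (0, 0) * v $ 0 = B $$ (0, 0) * v $ 0"
    using arg_cong[OF Av, of "\<lambda>x. x $ 0"] A B v by (simp add: scalar_prod_def)
  ultimately show ?thesis
    using A B by (intro eq_matI) auto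
qed

lemma invertible_mat_one: "invertible_mat (1\<^sub>m n :: 'a::semiring_1 mat)"
  unfolding invertible_mat_def inverts_mat_def by (auto intro: exI[of _ "1\<^sub>m n"])

section \<open>The X-degree filtration of the coproduct\<close>

definition tens_deg_le :: "nat \<Rightarrow> 'k::field tens \<Rightarrow> bool" where
  "tens_deg_le K f \<longleftrightarrow> (\<forall>p q. K < fst p + fst q \<longrightarrow> f p q = 0)"

lemma tens_deg_le_tunit: "tens_deg_le 0 tunit"
  unfolding tens_deg_le_def tunit_def by auto

lemma tens_deg_le_mulDX: "tens_deg_le K f \<Longrightarrow> tens_deg_le (Suc K) (mulDX f)"
  unfolding tens_deg_le_def mulDX_def lX_def lX'_def rX_def dR_def by (auto split: prod.splits)

lemma tens_deg_le_mulDX': "tens_deg_le K f \<Longrightarrow> tens_deg_le K (mulDX' f)"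
  unfolding tens_deg_le_def mulDX'_def lX'_def rX'_def by (auto split: prod.splits)

lemma tens_deg_le_coprod: "tens_deg_le (fst m) (coprod m :: 'k::field tens)"
proof -
  have "tens_deg_le i ((mulDX ^^ i) (tunit :: 'k tens))" for i
    by (induction i) (simp_all add: tens_deg_le_tunit tens_deg_le_mulDX)
  then show ?thesis
    unfolding coprod_def Let_def by (auto intro: tens_deg_le_mulDX')
qed

lemma coprod_deg_le:
  "coprod m p q \<noteq> (0::'k::field) \<Longrightarrow> fst p + fst q \<le> fst m"
  using tens_deg_le_coprod[of m] unfolding tens_deg_le_def by (meson not_le)

lemma coprod_0_False: "coprod (0, False) = tunit"
  unfolding coprod_def by simp

lemma coprod_0_True: "coprod (0, True) p q =
   (if (p = (0,True) \<and> q = (0,False)) \<or> (p = (0,False) \<and> q = (0,True)) \<or> (p = (0,True) \<and> q = (0,True))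
    then 1 else (0::'k::field))"
  unfolding coprod_def mulDX'_def lX'_def rX'_def tunit_def
  by (cases p; cases q; auto)

lemma M1_rep_carrier: "M1_rep n D R \<Longrightarrow> R m \<in> carrier_mat n n"
  unfolding M1_rep_def by blast

lemma M1_rep_D_carrier: "M1_rep n D R \<Longrightarrow> D \<in> carrier_mat n n"
  unfolding M1_rep_def by blast

lemma M1_rep_finite_support: "M1_rep n D R \<Longrightarrow> finite {m. R m \<noteq> 0\<^sub>m n n}"
  unfolding M1_rep_def by blast

lemma M1_rep_mult_vec_carrier:
  "M1_rep n D R \<Longrightarrow> w \<in> carrier_vec n \<Longrightarrow> R m *\<^sub>v w \<in> carrier_vec n"
  using M1_rep_carrier by (metis mult_mat_vec_carrier)

lemma M1_rep_mult_mult_vec_index: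
  fixes R :: "idx \<Rightarrow> 'k::field mat"
  assumes rep: "M1_rep n D R" and w: "w \<in> carrier_vec n" and a: "a < n"
  shows "(R p *\<^sub>v (R q *\<^sub>v w)) $ a = (\<Sum>m\<in>{m. R m \<noteq> 0\<^sub>m n n}. coprod m p q * (R m *\<^sub>v w) $ a)"
proof -
  let ?S = "{m. R m \<noteq> 0\<^sub>m n n}"
  have C: "\<And>m. R m \<in> carrier_mat n n" using M1_rep_carrier[OF rep] .
  have coassoc: "\<And>b. b < n \<Longrightarrow> (R p * R q) $$ (a, b) = (\<Sum>m\<in>?S. coprod m p q * R m $$ (a, b))"
    using rep a unfolding M1_rep_def by blast
  have "(R p *\<^sub>v (R q *\<^sub>v w)) $ a = (\<Sum>b<n. (R p * R q) $$ (a, b) * w $ b)"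
    using C[of p] C[of q] w a
    by (auto simp flip: assoc_mult_mat_vec simp: scalar_prod_def lessThan_atLeast0)
  also have "\<dots> = (\<Sum>b<n. \<Sum>m\<in>?S. coprod m p q * R m $$ (a, b) * w $ b)"
    by (rule sum.cong) (auto simp: coassoc sum_distrib_right)
  also have "\<dots> = (\<Sum>m\<in>?S. \<Sum>b<n. coprod m p q * R m $$ (a, b) * w $ b)"
    by (rule sum.swap)
  also have "\<dots> = (\<Sum>m\<in>?S. coprod m p q * (R m *\<^sub>v w) $ a)"
  proof (rule sum.cong)
    fix m
    have "(R m *\<^sub>v w) $ a = (\<Sum>b<n. R m $$ (a, b) * w $ b)"
      using C[of m] w a by (auto simp: scalar_prod_def lessThan_atLeast0)
    then show "(\<Sum>b<n. coprod m p q * R m $$ (a, b) * w $ b) = coprod m p q * (R m *\<^sub>v w) $ a"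
      by (simp add: sum_distrib_left mult.assoc)
  qed simp
  finally show ?thesis .
qed

lemma M1_rep_mult_mult_vec:
  fixes R :: "idx \<Rightarrow> 'k::field mat"
  assumes rep: "M1_rep n D R" and w: "w \<in> carrier_vec n"
    and others: "\<And>m. m \<noteq> m0 \<Longrightarrow> coprod m p q \<noteq> (0::'k) \<Longrightarrow> R m *\<^sub>v w = 0\<^sub>v n"
  shows "R p *\<^sub>v (R q *\<^sub>v w) = coprod m0 p q \<cdot>\<^sub>v (R m0 *\<^sub>v w)"
proof (rule eq_vecI)
  let ?S = "{m. R m \<noteq> 0\<^sub>m n n}"
  have C: "\<And>m. R m \<in> carrier_mat n n" using M1_rep_carrier[OF rep] .
  show "dim_vec (R p *\<^sub>v (R q *\<^sub>v w)) = dim_vec (coprod m0 p q \<cdot>\<^sub>v (R m0 *\<^sub>v w))"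
    using carrier_matD[OF C] by simp
  fix a assume "a < dim_vec (coprod m0 p q \<cdot>\<^sub>v (R m0 *\<^sub>v w))"
  then have a: "a < n" using carrier_matD[OF C] by simp
  have "(R p *\<^sub>v (R q *\<^sub>v w)) $ a = (\<Sum>m\<in>?S. coprod m p q * (R m *\<^sub>v w) $ a)"
    by (rule M1_rep_mult_mult_vec_index[OF rep w a])
  also have "\<dots> = (\<Sum>m\<in>?S. if m = m0 then coprod m0 p q * (R m0 *\<^sub>v w) $ a else 0)"
  proof (rule sum.cong)
    fix m
    show "coprod m p q * (R m *\<^sub>v w) $ a = (if m = m0 then coprod m0 p q * (R m0 *\<^sub>v w) $ a else 0)"
      using others[of m] a by (cases "coprod m p q = (0::'k)") auto
  qed simp
  also have "\<dots> = coprod m0 p q * (R m0 *\<^sub>v w) $ a"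
    using w a by (cases "m0 \<in> ?S") (auto simp: M1_rep_finite_support[OF rep])
  finally show "(R p *\<^sub>v (R q *\<^sub>v w)) $ a = (coprod m0 p q \<cdot>\<^sub>v (R m0 *\<^sub>v w)) $ a"
    using carrier_matD[OF C] a by simp
qed

lemma M1_rep_mult_mult_vec_eq_0:
  fixes R :: "idx \<Rightarrow> 'k::field mat"
  assumes rep: "M1_rep n D R" and w: "w \<in> carrier_vec n"
    and killed: "\<And>m. coprod m p q \<noteq> (0::'k) \<Longrightarrow> R m *\<^sub>v w = 0\<^sub>v n"
  shows "R p *\<^sub>v (R q *\<^sub>v w) = 0\<^sub>v n"
proof -
  have "R p *\<^sub>v (R q *\<^sub>v w) = coprod p p q \<cdot>\<^sub>v (R p *\<^sub>v w)"
    using M1_rep_mult_mult_vec[OF rep w killed] .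
  also have "\<dots> = 0\<^sub>v n"
    using killed[of p] carrier_matD[OF M1_rep_carrier[OF rep, of p]]
    by (cases "coprod p p q = (0::'k)") auto
  finally show ?thesis .
qed

lemma M1_rep_mult_D_mult_vec:
  fixes R :: "idx \<Rightarrow> 'k::field mat"
  assumes rep: "M1_rep n D R" and u: "u \<in> carrier_vec n"
  shows "R (i, b) *\<^sub>v (D *\<^sub>v u) = D *\<^sub>v (R (i, b) *\<^sub>v u) +
           (if b then of_nat (i + 1) \<cdot>\<^sub>v (R (i + 1, False) *\<^sub>v u) else 0\<^sub>v n)"
proof -
  have C: "\<And>m. R m \<in> carrier_mat n n" using M1_rep_carrier[OF rep] .
  have DC: "D \<in> carrier_mat n n" using M1_rep_D_carrier[OF rep] .
  have comm: "R (i, b) * D = D * R (i, b) + (if b then of_nat (i + 1) \<cdot>\<^sub>m R (i + 1, False) else 0\<^sub>m n n)"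
    using rep DC C[of "(i, b)"] unfolding M1_rep_def by (cases b) auto
  have "R (i, b) *\<^sub>v (D *\<^sub>v u) = (R (i, b) * D) *\<^sub>v u"
    using assoc_mult_mat_vec[OF C DC u] by simp
  also have "\<dots> = (D * R (i, b)) *\<^sub>v u + (if b then of_nat (i + 1) \<cdot>\<^sub>m R (i + 1, False) else 0\<^sub>m n n) *\<^sub>v u"
    unfolding comm using C DC u by (intro add_mult_distrib_mat_vec[of _ n n]) auto
  finally show ?thesis
    using assoc_mult_mat_vec[OF DC C u] smult_mat_mult_vec[OF C u] u by (cases b) simp_all
qed

section \<open>Vectors of low X-degree\<close>

(* The vectors w with \<rho>(w) \<in> V \<otimes> span {X^i X'^j | i < s}. *)
definition deg_lt_vecs :: "nat \<Rightarrow> (idx \<Rightarrow> 'k::field mat) \<Rightarrow> nat \<Rightarrow> 'k vec set" where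
  "deg_lt_vecs n R s = {w \<in> carrier_vec n. \<forall>i b. s \<le> i \<longrightarrow> R (i, b) *\<^sub>v w = 0\<^sub>v n}"

lemma deg_lt_vecs_carrier: "w \<in> deg_lt_vecs n R s \<Longrightarrow> w \<in> carrier_vec n"
  unfolding deg_lt_vecs_def by blast

lemma M1_rep_mult_mult_vec_deg_lt:
  fixes R :: "idx \<Rightarrow> 'k::field mat"
  assumes rep: "M1_rep n D R" and w: "w \<in> deg_lt_vecs n R s" and deg: "s \<le> fst p + fst q"
  shows "R p *\<^sub>v (R q *\<^sub>v w) = 0\<^sub>v n"
proof (rule M1_rep_mult_mult_vec_eq_0[OF rep])
  show "w \<in> carrier_vec n" using deg_lt_vecs_carrier[OF w] .
  fix m assume "coprod m p q \<noteq> (0::'k)"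
  then have "fst p + fst q \<le> fst m" by (rule coprod_deg_le)
  then show "R m *\<^sub>v w = 0\<^sub>v n" using w deg unfolding deg_lt_vecs_def by (cases m) auto
qed

lemma deg_lt_vecs_descend:
  fixes R :: "idx \<Rightarrow> 'k::field mat"
  assumes rep: "M1_rep n D R" and s: "1 \<le> s"
    and u: "u \<in> deg_lt_vecs n R (Suc s)" "u \<noteq> 0\<^sub>v n"
  shows "\<exists>w\<in>deg_lt_vecs n R s. w \<noteq> 0\<^sub>v n"
proof (cases "\<exists>b. R (s, b) *\<^sub>v u \<noteq> 0\<^sub>v n")
  case True
  then obtain b where nz: "R (s, b) *\<^sub>v u \<noteq> 0\<^sub>v n" by blast
  have "R (i, b') *\<^sub>v (R (s, b) *\<^sub>v u) = 0\<^sub>v n" if "s \<le> i" for i b'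
    using M1_rep_mult_mult_vec_deg_lt[OF rep u(1)] that s by simp
  moreover have "R (s, b) *\<^sub>v u \<in> carrier_vec n"
    using M1_rep_mult_vec_carrier[OF rep] u(1) unfolding deg_lt_vecs_def by blast
  ultimately show ?thesis using nz unfolding deg_lt_vecs_def by blast
next
  case False
  have "R (i, b) *\<^sub>v u = 0\<^sub>v n" if "s \<le> i" for i b
    using False u(1) that unfolding deg_lt_vecs_def by (cases "i = s") auto
  then show ?thesis using u unfolding deg_lt_vecs_def by blast
qed

lemma deg_lt_vecs_1_nontrivial:
  fixes R :: "idx \<Rightarrow> 'k::field mat"
  assumes rep: "M1_rep n D R" and n: "0 < n"
  shows "\<exists>w\<in>deg_lt_vecs n R 1. w \<noteq> 0\<^sub>v n"
proof -
  obtain N where N: "\<And>m. R m \<noteq> 0\<^sub>m n n \<Longrightarrow> fst m \<le> N"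
    using M1_rep_finite_support[OF rep, THEN finite_imageI, of fst]
    unfolding finite_nat_set_iff_bounded_le by blast
  have "1 \<le> Suc N" by simp
  then show ?thesis
  proof (induction rule: inc_induct)
    case base
    have "R (i, b) = 0\<^sub>m n n" if "Suc N \<le> i" for i b
      using N[of "(i, b)"] that by fastforce
    then have "unit_vec n 0 \<in> deg_lt_vecs n R (Suc N)"
      unfolding deg_lt_vecs_def by simp
    moreover have "unit_vec n 0 \<noteq> (0\<^sub>v n :: 'k vec)"
      using n by (auto simp: vec_eq_iff)
    ultimately show ?case by blast
  next
    case (step s)
    then show ?case using deg_lt_vecs_descend[OF rep] by blast
  qed
qed

lemma deg_lt_vecs_1_R0True:
  fixes R :: "idx \<Rightarrow> 'k::field mat"
  assumes rep: "M1_rep n D R" and u: "u \<in> deg_lt_vecs n R 1"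
  shows "R (0, True) *\<^sub>v u \<in> deg_lt_vecs n R 1"
  using M1_rep_mult_mult_vec_deg_lt[OF rep u] M1_rep_mult_vec_carrier[OF rep] u
  unfolding deg_lt_vecs_def by auto

lemma deg_lt_vecs_1_D:
  fixes R :: "idx \<Rightarrow> 'k::field mat"
  assumes rep: "M1_rep n D R" and u: "u \<in> deg_lt_vecs n R 1"
  shows "D *\<^sub>v u \<in> deg_lt_vecs n R 1"
proof -
  have DC: "D \<in> carrier_mat n n" using M1_rep_D_carrier[OF rep] .
  have uc: "u \<in> carrier_vec n" using deg_lt_vecs_carrier[OF u] .
  have "R (i, b) *\<^sub>v (D *\<^sub>v u) = 0\<^sub>v n" if "1 \<le> i" for i b
    using M1_rep_mult_D_mult_vec[OF rep uc, of i b] u that DC unfolding deg_lt_vecs_def by auto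
  then show ?thesis using DC uc unfolding deg_lt_vecs_def by auto
qed

lemma deg_lt_vecs_1_R0True_D:
  fixes R :: "idx \<Rightarrow> 'k::field mat"
  assumes rep: "M1_rep n D R" and u: "u \<in> deg_lt_vecs n R 1"
  shows "R (0, True) *\<^sub>v (D *\<^sub>v u) = D *\<^sub>v (R (0, True) *\<^sub>v u)"
proof -
  have DC: "D \<in> carrier_mat n n" using M1_rep_D_carrier[OF rep] .
  have uc: "u \<in> carrier_vec n" using deg_lt_vecs_carrier[OF u] .
  show ?thesis
    using M1_rep_mult_D_mult_vec[OF rep uc, of 0 True] u DC M1_rep_mult_vec_carrier[OF rep uc]
    unfolding deg_lt_vecs_def by auto
qed

lemma deg_lt_vecs_1_R0True_idem:
  fixes R :: "idx \<Rightarrow> 'k::field mat"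
  assumes rep: "M1_rep n D R" and u: "u \<in> deg_lt_vecs n R 1"
  shows "R (0, True) *\<^sub>v (R (0, True) *\<^sub>v u) = R (0, True) *\<^sub>v u"
proof -
  have uc: "u \<in> carrier_vec n" using deg_lt_vecs_carrier[OF u] .
  have "R (0, True) *\<^sub>v (R (0, True) *\<^sub>v u) = coprod (0, True) (0, True) (0, True) \<cdot>\<^sub>v (R (0, True) *\<^sub>v u)"
  proof (rule M1_rep_mult_mult_vec[OF rep uc])
    fix m :: idx assume "m \<noteq> (0, True)" and "coprod m (0, True) (0, True) \<noteq> (0::'k)"
    moreover obtain i b where m: "m = (i, b)" by (cases m)
    ultimately have "i \<noteq> 0" by (cases b; cases i) (auto simp: coprod_0_False tunit_def)
    then show "R m *\<^sub>v u = 0\<^sub>v n" using u m unfolding deg_lt_vecs_def by auto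
  qed
  then show ?thesis by (simp add: coprod_0_True)
qed

lemma M1_rep_eigenvector:
  fixes R :: "idx \<Rightarrow> 'k::field mat"
  assumes rep: "M1_rep n D R" and n: "0 < n"
  obtains v where "v \<in> deg_lt_vecs n R 1" "v \<noteq> 0\<^sub>v n" "D *\<^sub>v v = 0\<^sub>v n"
    and "R (0, True) *\<^sub>v v = 0\<^sub>v n \<or> R (0, True) *\<^sub>v v = v"
proof -
  let ?B = "R (0, True)"
  have DC: "D \<in> carrier_mat n n" and DD: "D * D = 0\<^sub>m n n"
    using rep unfolding M1_rep_def by blast+
  obtain w where w: "w \<in> deg_lt_vecs n R 1" "w \<noteq> 0\<^sub>v n"
    using deg_lt_vecs_1_nontrivial[OF rep n] by blast
  obtain u where u: "u \<in> deg_lt_vecs n R 1" "u \<noteq> 0\<^sub>v n" and Bu: "?B *\<^sub>v u = 0\<^sub>v n \<or> ?B *\<^sub>v u = u"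
  proof (cases "?B *\<^sub>v w = 0\<^sub>v n")
    case True
    then show ?thesis using that[of w] w by blast
  next
    case False
    then show ?thesis
      using that[of "?B *\<^sub>v w"] deg_lt_vecs_1_R0True[OF rep w(1)] deg_lt_vecs_1_R0True_idem[OF rep w(1)]
      by blast
  qed
  show ?thesis
  proof (cases "D *\<^sub>v u = 0\<^sub>v n")
    case True
    then show ?thesis using that u Bu by blast
  next
    case False
    have "D *\<^sub>v (D *\<^sub>v u) = 0\<^sub>v n"
      using DC DD deg_lt_vecs_carrier[OF u(1)] by (simp flip: assoc_mult_mat_vec)
    moreover have "?B *\<^sub>v (D *\<^sub>v u) = 0\<^sub>v n \<or> ?B *\<^sub>v (D *\<^sub>v u) = D *\<^sub>v u"
      using deg_lt_vecs_1_R0True_D[OF rep u(1)] Bu DC by auto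
    ultimately show ?thesis using that deg_lt_vecs_1_D[OF rep u(1)] False by blast
  qed
qed

section \<open>Classification of the irreducible representations\<close>

lemma M1_subrep_line:
  fixes R :: "idx \<Rightarrow> 'k::field mat"
  assumes rep: "M1_rep n D R" and v: "v \<in> deg_lt_vecs n R 1"
    and Dv: "D *\<^sub>v v = 0\<^sub>v n" and Bv: "R (0, True) *\<^sub>v v = c \<cdot>\<^sub>v v"
  shows "M1_subrep n D R (range (\<lambda>a. a \<cdot>\<^sub>v v))"
proof -
  have vc: "v \<in> carrier_vec n" using deg_lt_vecs_carrier[OF v(1)] .
  have DC: "D \<in> carrier_mat n n" and R0: "R (0, False) = 1\<^sub>m n"
    using rep unfolding M1_rep_def by blast+
  have "\<exists>a. R (i, b) *\<^sub>v v = a \<cdot>\<^sub>v v" for i b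
  proof (cases "i = 0")
    case True
    then show ?thesis using Bv R0 vc by (cases b) (auto intro: exI[of _ 1])
  next
    case False
    then show ?thesis using v vc unfolding deg_lt_vecs_def by (auto intro: exI[of _ 0])
  qed
  then have "R m *\<^sub>v w \<in> range (\<lambda>a. a \<cdot>\<^sub>v v)" if "w \<in> range (\<lambda>a. a \<cdot>\<^sub>v v)" for m w
    using mult_vec_line[OF M1_rep_carrier[OF rep] vc _ that] by (metis surj_pair)
  moreover have "D *\<^sub>v w \<in> range (\<lambda>a. a \<cdot>\<^sub>v v)" if "w \<in> range (\<lambda>a. a \<cdot>\<^sub>v v)" for w
    using mult_vec_line[OF DC vc, of 0] Dv vc that by simp
  ultimately show ?thesis
    unfolding M1_subrep_def using is_subspace_line[OF vc] by blast
qed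

lemma M1_rep_1_eigenvector_cases:
  fixes R :: "idx \<Rightarrow> 'k::field mat"
  assumes rep: "M1_rep 1 D R" and v: "v \<in> deg_lt_vecs 1 R 1" "v \<noteq> 0\<^sub>v 1"
    and Dv: "D *\<^sub>v v = 0\<^sub>v 1" and Bv: "R (0, True) *\<^sub>v v = 0\<^sub>v 1 \<or> R (0, True) *\<^sub>v v = v"
  shows "D = 0\<^sub>m 1 1 \<and> (R = triv_R \<or> R = Lxi_R)"
proof -
  have vc: "v \<in> carrier_vec 1" using deg_lt_vecs_carrier[OF v(1)] .
  have DC: "D \<in> carrier_mat 1 1" and R0: "R (0, False) = 1\<^sub>m 1"
    using rep unfolding M1_rep_def by blast+
  have high: "R (i, b) *\<^sub>v v = 0\<^sub>v 1" if "i \<noteq> 0" for i b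
    using v that unfolding deg_lt_vecs_def by auto
  have eqI: "R = R'" if R': "\<And>m. R' m \<in> carrier_mat 1 1" "\<And>m. R m *\<^sub>v v = R' m *\<^sub>v v" for R'
    using mat_1x1_eqI[OF M1_rep_carrier[OF rep] R'(1) vc v(2) R'(2)] by blast
  have "D = 0\<^sub>m 1 1"
    using mat_1x1_eqI[OF DC _ vc v(2)] Dv vc by simp
  moreover from Bv have "R = triv_R \<or> R = Lxi_R"
  proof
    assume "R (0, True) *\<^sub>v v = 0\<^sub>v 1"
    then have "R (i, b) *\<^sub>v v = triv_R (i, b) *\<^sub>v v" for i b
      using high R0 vc by (cases i; cases b) (auto simp: triv_R_def)
    then show ?thesis using eqI[of triv_R] by (auto simp: triv_R_def)
  next
    assume "R (0, True) *\<^sub>v v = v"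
    then have "R (i, b) *\<^sub>v v = Lxi_R (i, b) *\<^sub>v v" for i b
      using high R0 vc by (cases i; cases b) (auto simp: Lxi_R_def)
    then show ?thesis using eqI[of Lxi_R] by (auto simp: Lxi_R_def)
  qed
  ultimately show ?thesis by blast
qed

lemma M1_irreducible_cases:
  fixes R :: "idx \<Rightarrow> 'k::field mat"
  assumes irr: "M1_irreducible n D R"
  shows "n = 1 \<and> D = 0\<^sub>m 1 1 \<and> (R = triv_R \<or> R = Lxi_R)"
proof -
  have rep: "M1_rep n D R" and n: "0 < n"
    and simple: "\<And>W. M1_subrep n D R W \<Longrightarrow> W = {0\<^sub>v n} \<or> W = carrier_vec n"
    using irr unfolding M1_irreducible_def by auto
  obtain v where v: "v \<in> deg_lt_vecs n R 1" "v \<noteq> 0\<^sub>v n" and Dv: "D *\<^sub>v v = 0\<^sub>v n"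
    and Bv: "R (0, True) *\<^sub>v v = 0\<^sub>v n \<or> R (0, True) *\<^sub>v v = v"
    using M1_rep_eigenvector[OF rep n] by blast
  have vc: "v \<in> carrier_vec n" using deg_lt_vecs_carrier[OF v(1)] .
  obtain c where "R (0, True) *\<^sub>v v = c \<cdot>\<^sub>v v"
    using Bv vc by (metis one_smult_vec zero_smult_vec carrier_vecD)
  then have "M1_subrep n D R (range (\<lambda>a. a \<cdot>\<^sub>v v))"
    by (rule M1_subrep_line[OF rep v(1) Dv])
  moreover have "v \<in> range (\<lambda>a. a \<cdot>\<^sub>v v)"
    by (rule range_eqI[of _ _ 1]) simp
  ultimately have "range (\<lambda>a. a \<cdot>\<^sub>v v) = carrier_vec n"
    using simple v(2) by blast
  then have "n = 1"
    using line_eq_carrier_vec_imp_le_1[OF vc] n by simp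
  then show ?thesis
    using M1_rep_1_eigenvector_cases rep v Dv Bv by blast
qed

lemma M1_rep_iso_refl:
  assumes rep: "M1_rep n D R"
  shows "M1_iso n D R n D R"
  unfolding M1_iso_def
proof (intro conjI bexI[of _ "1\<^sub>m n"] allI)
  fix m
  show "1\<^sub>m n * R m = R m * 1\<^sub>m n" using M1_rep_carrier[OF rep, of m] by simp
next
  show "1\<^sub>m n * D = D * 1\<^sub>m n" using M1_rep_D_carrier[OF rep] by simp
qed (simp_all add: invertible_mat_one)

lemma M1_iso_preserves_zero:
  fixes R :: "idx \<Rightarrow> 'k::field mat"
  assumes iso: "M1_iso n D R n' D' R'" and R'm: "R' m \<in> carrier_mat n n" and Rm: "R m = 0\<^sub>m n n"
  shows "R' m = 0\<^sub>m n n"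
proof -
  obtain P where P: "P \<in> carrier_mat n n" "invertible_mat P" and PR: "P * R m = R' m * P"
    using iso unfolding M1_iso_def by blast
  then obtain Q where PQ: "P * Q = 1\<^sub>m n" and QP: "Q * P = 1\<^sub>m (dim_row Q)"
    unfolding invertible_mat_def inverts_mat_def by auto
  have Q: "Q \<in> carrier_mat n n"
    using P(1) arg_cong[OF PQ, of dim_col] arg_cong[OF QP, of dim_col] by auto
  have "R' m = (R' m * P) * Q"
    using R'm P(1) Q PQ by simp
  also have "\<dots> = 0\<^sub>m n n"
    using P(1) Q by (simp flip: PR add: Rm)
  finally show ?thesis .
qed

lemma triv_R_M1_rep: "M1_rep 1 (0\<^sub>m 1 1 :: 'k::field mat) triv_R"
proof -
  have "{m. (triv_R m :: 'k mat) \<noteq> 0\<^sub>m 1 1} = {(0, False)}"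
    unfolding triv_R_def using one_mat_1_neq_zero by auto
  then show ?thesis
    unfolding M1_rep_def by (auto simp: triv_R_def coprod_0_False tunit_def scalar_prod_def)
qed

lemma Lxi_R_M1_rep: "M1_rep 1 (0\<^sub>m 1 1 :: 'k::field mat) Lxi_R"
proof -
  have "{m. (Lxi_R m :: 'k mat) \<noteq> 0\<^sub>m 1 1} = {(0, False), (0, True)}"
    unfolding Lxi_R_def using one_mat_1_neq_zero by auto
  then show ?thesis
    unfolding M1_rep_def by (auto simp: Lxi_R_def coprod_0_False coprod_0_True tunit_def scalar_prod_def)
qed

lemma M1_rep_1_irreducible: "M1_rep 1 D R \<Longrightarrow> M1_irreducible 1 D R"
  unfolding M1_irreducible_def M1_subrep_def using is_subspace_1 by blast

lemma not_M1_iso_triv_R_Lxi_R: "\<not> M1_iso 1 (0\<^sub>m 1 1 :: 'k::field mat) triv_R 1 (0\<^sub>m 1 1) Lxi_R"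
  using M1_iso_preserves_zero[of 1 "0\<^sub>m 1 1" triv_R 1 "0\<^sub>m 1 1" Lxi_R "(0, True)"] one_mat_1_neq_zero
  by (auto simp: triv_R_def Lxi_R_def)

theorem mainTheorem17:
  fixes k_type :: "'k::alg_closed_field itself"
  assumes "CHAR('k) = 2"
  shows "M1_irreducible 1 (0\<^sub>m 1 1 :: 'k mat) triv_R \<and>
         M1_irreducible 1 (0\<^sub>m 1 1 :: 'k mat) Lxi_R \<and>
         \<not> M1_iso 1 (0\<^sub>m 1 1 :: 'k mat) triv_R 1 (0\<^sub>m 1 1) Lxi_R \<and>
         (\<forall>n (D :: 'k mat) R. M1_irreducible n D R \<longrightarrow>
            M1_iso n D R 1 (0\<^sub>m 1 1) triv_R \<or> M1_iso n D R 1 (0\<^sub>m 1 1) Lxi_R)"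
proof (intro conjI allI impI)
  show "M1_irreducible 1 (0\<^sub>m 1 1 :: 'k mat) triv_R"
    by (rule M1_rep_1_irreducible[OF triv_R_M1_rep])
  show "M1_irreducible 1 (0\<^sub>m 1 1 :: 'k mat) Lxi_R"
    by (rule M1_rep_1_irreducible[OF Lxi_R_M1_rep])
  show "\<not> M1_iso 1 (0\<^sub>m 1 1 :: 'k mat) triv_R 1 (0\<^sub>m 1 1) Lxi_R"
    by (rule not_M1_iso_triv_R_Lxi_R)
  fix n and D :: "'k mat" and R
  assume "M1_irreducible n D R"
  then have "n = 1" "D = 0\<^sub>m 1 1" "R = triv_R \<or> R = Lxi_R"
    by (auto dest: M1_irreducible_cases)
  then show "M1_iso n D R 1 (0\<^sub>m 1 1) triv_R \<or> M1_iso n D R 1 (0\<^sub>m 1 1) Lxi_R"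
    using M1_rep_iso_refl triv_R_M1_rep Lxi_R_M1_rep by blast
qed

end
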